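(* Let $\mu>0$, $\tau>0$, $\kappa>0$, $n\in\mathbb N$ be fixed and let $\Delta(\lambda,\alpha)=1-(1-\ln\alpha)e^{-\lambda\tau}(1+\frac{\lambda}{\mu+\kappa})^{-n-1}$. For $k\in\mathbb N$ let $\omega_k>0$ be the unique solution of $\omega\tau+(n+1)\arctan\frac{\omega}{\mu+\kappa}=\pi+2k\pi$ and $\alpha_k=\exp\big(1+(1+\omega_k^2/(\mu+\kappa)^2)^{(n+1)/2}\big)$, so that $\Delta(\pm i\omega_k,\alpha_k)=0$. Then for each $k\ge0$ there exist $\rho_k>0$ and a $C^1$ map $\hat\lambda_k:(\alpha_k-\rho_k,\alpha_k+\rho_k)\to\mathbb C$ such that $\hat\lambda_k(\alpha_k)=i\omega_k$, $\Delta(\hat\lambda_k(\alpha),\alpha)=0$ for all $\alpha\in(\alpha_k-\rho_k,\alpha_k+\rho_k)$, and $$\operatorname{Re}\frac{d\hat\lambda_k}{d\alpha}(\alpha_k)>0.$$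
   Context: $\Delta$ is the characteristic function of the linearization at $\bar u(a)=\ln(\alpha)e^{-\mu a}$ of $\partial_tu+\partial_au=-\mu u$, $u(t,0)=\alpha f(\int_0^\infty\beta(a)u(t,a)\,da)$, $f(x)=xe^{-x}$, with $\beta(a)=C_0(a-\tau)^ne^{-\kappa(a-\tau)}\mathbf 1_{[\tau,\infty)}(a)$ normalized by $\int_0^\infty\beta(a)e^{-\mu a}da=1$. *)

theory Defs
  imports "HOL-Analysis.Analysis"
begin

definition Delta :: "real \<Rightarrow> real \<Rightarrow> real \<Rightarrow> nat \<Rightarrow> complex \<Rightarrow> real \<Rightarrow> complex" where
  "Delta mu tau kappa n lam alpha =
     1 - complex_of_real (1 - ln alpha) * exp (- lam * complex_of_real tau)
         * inverse ((1 + lam / complex_of_real (mu + kappa)) ^ (n + 1))"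

definition omega_k :: "real \<Rightarrow> real \<Rightarrow> real \<Rightarrow> nat \<Rightarrow> nat \<Rightarrow> real" where
  "omega_k mu tau kappa n k =
     (THE w. w > 0 \<and> w * tau + real (n + 1) * arctan (w / (mu + kappa)) = pi + 2 * real k * pi)"

definition alpha_k :: "real \<Rightarrow> real \<Rightarrow> real \<Rightarrow> nat \<Rightarrow> nat \<Rightarrow> real" where
  "alpha_k mu tau kappa n k =
     exp (1 + (1 + (omega_k mu tau kappa n k)\<^sup>2 / (mu + kappa)\<^sup>2) powr (real (n + 1) / 2))"

end

theory Submission
  imports Defs "HOL-Complex_Analysis.Complex_Analysis"
begin

text \<open>With \<open>G(z) = exp(\<tau> z) (1 + z/(\<mu>+\<kappa>))^(n+1)\<close> (\<open>char_denom\<close>) we have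
  \<open>\<Delta>(\<lambda>,\<alpha>) = 1 - (1 - ln \<alpha>)/G(\<lambda>)\<close>, so the zeros of \<open>\<Delta>(-,\<alpha>)\<close> are the solutions of
  \<open>G(\<lambda>) = 1 - ln \<alpha>\<close>. The defining equation of \<open>\<omega>\<^sub>k\<close> says exactly that \<open>G(i\<omega>\<^sub>k)\<close> is the
  negative real \<open>-R = 1 - ln \<alpha>\<^sub>k\<close>. The logarithmic derivative \<open>G'/G = \<tau> + (n+1)/(\<mu>+\<kappa>+z)\<close>
  has positive real part at \<open>i\<omega>\<^sub>k\<close>, so \<open>G\<close> is locally biholomorphic there, and
  \<open>\<lambda>(\<alpha>) = G\<^sup>-\<^sup>1(1 - ln \<alpha>)\<close> is a \<open>C\<^sup>1\<close> branch of zeros with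
  \<open>\<lambda>'(\<alpha>\<^sub>k) = -1/(\<alpha>\<^sub>k G'(i\<omega>\<^sub>k)) = 1/(\<alpha>\<^sub>k R (G'/G)(i\<omega>\<^sub>k))\<close>, whose real part is positive.\<close>

lemma holomorphic_inverse_along_curve:
  fixes G :: "complex \<Rightarrow> complex" and \<phi> \<phi>' :: "real \<Rightarrow> complex"
  assumes holG: "G holomorphic_on S" and "open S" "\<xi> \<in> S" and dG: "deriv G \<xi> \<noteq> 0"
    and "open A" "a0 \<in> A" and \<phi>a0: "\<phi> a0 = G \<xi>"
    and d\<phi>: "\<And>a. a \<in> A \<Longrightarrow> (\<phi> has_vector_derivative \<phi>' a) (at a)"
    and c\<phi>': "continuous_on A \<phi>'"
  shows "\<exists>\<rho>>0. \<exists>lam lam'. ball a0 \<rho> \<subseteq> A \<and> lam a0 = \<xi> \<and> lam' a0 = \<phi>' a0 / deriv G \<xi> \<and>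
           (\<forall>a\<in>ball a0 \<rho>. G (lam a) = \<phi> a \<and> (lam has_vector_derivative lam' a) (at a)) \<and>
           continuous_on (ball a0 \<rho>) lam'"
proof -
  obtain r where "r > 0" and sub: "ball \<xi> r \<subseteq> S" and oW: "open (G ` ball \<xi> r)"
    and inj: "inj_on G (ball \<xi> r)"
    using has_complex_derivative_locally_invertible[OF holG \<open>\<xi> \<in> S\<close> \<open>open S\<close> dG] by blast
  define W where "W = G ` ball \<xi> r"
  obtain h where holh: "h holomorphic_on W"
    and dh: "\<And>z. z \<in> ball \<xi> r \<Longrightarrow> deriv G z * deriv h (G z) = 1"
    and hG: "\<And>z. z \<in> ball \<xi> r \<Longrightarrow> h (G z) = z"
    using holomorphic_has_inverse[OF holomorphic_on_subset[OF holG sub] open_ball inj]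
    unfolding W_def by blast
  have Gh: "G (h y) = y" if "y \<in> W" for y
    using that hG unfolding W_def by auto
  have "open W" using oW by (simp add: W_def)
  have c\<phi>: "continuous_on A \<phi>"
    using d\<phi> by (metis continuous_at_imp_continuous_on has_vector_derivative_continuous)
  have "open (A \<inter> \<phi> -` W)"
    using continuous_open_preimage[OF c\<phi> \<open>open A\<close> \<open>open W\<close>] by (simp add: Int_commute)
  moreover have "a0 \<in> A \<inter> \<phi> -` W"
    using \<open>a0 \<in> A\<close> \<open>r > 0\<close> \<phi>a0 by (simp add: W_def)
  ultimately obtain \<rho> where "\<rho> > 0" and ball: "ball a0 \<rho> \<subseteq> A \<inter> \<phi> -` W"
    using open_contains_ball by blast
  define lam where "lam a = h (\<phi> a)" for a
  define lam' where "lam' a = \<phi>' a * deriv h (\<phi> a)" for a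
  have "lam a0 = \<xi>"
    using hG[of \<xi>] \<open>r > 0\<close> by (simp add: lam_def \<phi>a0)
  moreover have "lam' a0 = \<phi>' a0 / deriv G \<xi>"
    using dh[of \<xi>] \<open>r > 0\<close> dG by (simp add: lam'_def \<phi>a0 field_simps)
  moreover have "G (lam a) = \<phi> a \<and> (lam has_vector_derivative lam' a) (at a)"
    if "a \<in> ball a0 \<rho>" for a
  proof
    have "a \<in> A" "\<phi> a \<in> W" using that ball by auto
    then show "G (lam a) = \<phi> a" by (simp add: lam_def Gh)
    show "(lam has_vector_derivative lam' a) (at a)"
      using field_vector_diff_chain_at[OF d\<phi>[OF \<open>a \<in> A\<close>]
          holomorphic_derivI[OF holh \<open>open W\<close> \<open>\<phi> a \<in> W\<close>]]
      by (simp add: lam_def[abs_def] lam'_def o_def)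
  qed
  moreover have "continuous_on (ball a0 \<rho>) lam'"
  proof -
    have "continuous_on W (deriv h)"
      by (intro holomorphic_on_imp_continuous_on holomorphic_deriv holh \<open>open W\<close>)
    then have "continuous_on (ball a0 \<rho>) (\<lambda>a. deriv h (\<phi> a))"
      using ball by (intro continuous_on_compose2[OF _ continuous_on_subset[OF c\<phi>]]) auto
    then show ?thesis
      unfolding lam'_def using ball by (intro continuous_on_mult continuous_on_subset[OF c\<phi>']) auto
  qed
  ultimately show ?thesis
    using \<open>\<rho> > 0\<close> ball by blast
qed

definition char_denom :: "real \<Rightarrow> real \<Rightarrow> nat \<Rightarrow> complex \<Rightarrow> complex" where
  "char_denom tau c n z = exp (z * complex_of_real tau) * (1 + z / complex_of_real c) ^ (n + 1)"

lemma Delta_eq_0_if_char_denom_eq: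
  assumes "char_denom tau (mu + kappa) n lam = complex_of_real (1 - ln a)" and "ln a \<noteq> 1"
  shows "Delta mu tau kappa n lam a = 0"
proof -
  define P where "P = (1 + lam / complex_of_real (mu + kappa)) ^ (n + 1)"
  have eq: "complex_of_real (1 - ln a) = exp (lam * complex_of_real tau) * P"
    using assms(1) by (simp add: char_denom_def P_def)
  then have "P \<noteq> 0" using assms(2) by auto
  then have "complex_of_real (1 - ln a) * exp (- lam * complex_of_real tau) * inverse P = 1"
    unfolding eq by (simp add: exp_minus field_simps)
  then show ?thesis
    by (simp add: Delta_def P_def)
qed

lemma char_denom_has_derivative:
  assumes "c \<noteq> 0" and "complex_of_real c + z \<noteq> 0"
  shows "(char_denom tau c n has_field_derivative
           char_denom tau c n z * (tau + of_nat (n + 1) / (complex_of_real c + z))) (at z)"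
proof -
  define E where "E = exp (z * complex_of_real tau)"
  define u where "u = 1 + z / complex_of_real c"
  have cu: "complex_of_real c + z = complex_of_real c * u"
    using assms(1) by (simp add: u_def field_simps)
  then have "u \<noteq> 0" using assms(2) by auto
  have dexp: "((\<lambda>z. exp (z * complex_of_real tau)) has_field_derivative E * tau) (at z)"
    unfolding E_def by (auto intro!: derivative_eq_intros)
  have "((\<lambda>z. 1 + z / complex_of_real c) has_field_derivative 1 / complex_of_real c) (at z)"
    using assms(1) by (auto intro!: derivative_eq_intros)
  from DERIV_power[OF this, of "n + 1"]
  have dpow: "((\<lambda>z. (1 + z / complex_of_real c) ^ (n + 1)) has_field_derivative
                of_nat (n + 1) * u ^ n * (1 / complex_of_real c)) (at z)"
    by (simp add: u_def)
  have "(char_denom tau c n has_field_derivative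
          E * tau * u ^ (n + 1) + of_nat (n + 1) * u ^ n * (1 / complex_of_real c) * E) (at z)"
    using DERIV_mult[OF dexp dpow] by (simp add: char_denom_def[abs_def] E_def u_def)
  also have "E * tau * u ^ (n + 1) + of_nat (n + 1) * u ^ n * (1 / complex_of_real c) * E
      = char_denom tau c n z * (tau + of_nat (n + 1) / (complex_of_real c + z))"
    using assms(1) \<open>u \<noteq> 0\<close> unfolding cu
    by (simp add: char_denom_def E_def u_def[symmetric] field_simps)
  finally show ?thesis .
qed

lemma char_denom_holomorphic: "char_denom tau c n holomorphic_on UNIV"
  unfolding char_denom_def divide_inverse by (intro holomorphic_intros)

lemma char_denom_at_imaginary_root:
  fixes tau c w :: real and n k :: nat
  assumes "w * tau + real (n + 1) * arctan (w / c) = pi + 2 * real k * pi"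
  shows "char_denom tau c n (\<i> * complex_of_real w)
           = - complex_of_real ((1 + w\<^sup>2 / c\<^sup>2) powr (real (n + 1) / 2))"
proof -
  define x where "x = w / c"
  define s where "s = sqrt (1 + x\<^sup>2)"
  have "s > 0" unfolding s_def by (simp add: add_pos_nonneg)
  have "1 + \<i> * complex_of_real w / complex_of_real c = complex_of_real s * cis (arctan x)"
    using \<open>s > 0\<close> unfolding cis.ctr cos_arctan sin_arctan s_def[symmetric]
    by (simp add: complex_eq_iff x_def)
  then have "(1 + \<i> * complex_of_real w / complex_of_real c) ^ (n + 1)
      = complex_of_real (s ^ (n + 1)) * cis (real (n + 1) * arctan x)"
    by (simp only: power_mult_distrib of_real_power Complex.DeMoivre)
  moreover have "exp (\<i> * complex_of_real w * complex_of_real tau) = cis (w * tau)"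
    by (simp add: cis_conv_exp mult.commute mult.left_commute)
  ultimately have "char_denom tau c n (\<i> * complex_of_real w)
      = complex_of_real (s ^ (n + 1)) * cis (pi + 2 * real k * pi)"
    using assms by (simp add: char_denom_def x_def cis_mult mult_ac)
  also have "cis (pi + 2 * real k * pi) = -1"
    using cis_multiple_2pi[of "real k"] by (simp add: cis_mult[symmetric] mult_ac)
  also have "s ^ (n + 1) = (1 + w\<^sup>2 / c\<^sup>2) powr (real (n + 1) / 2)"
    using \<open>s > 0\<close>
    by (simp add: s_def x_def powr_realpow[symmetric] powr_half_sqrt[symmetric] powr_powr
        power_divide add_pos_nonneg powr_add[symmetric] add_divide_distrib)
  finally show ?thesis by simp
qed

lemma ex1_omega_equation:
  fixes tau c :: real and n k :: nat
  assumes tau: "tau > 0" and c: "c > 0"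
  shows "\<exists>!w. w > 0 \<and> w * tau + real (n + 1) * arctan (w / c) = pi + 2 * real k * pi"
proof -
  define F where "F w = w * tau + real (n + 1) * arctan (w / c)" for w
  define T where "T = pi + 2 * real k * pi"
  have "T > 0" unfolding T_def by (simp add: add_pos_nonneg)
  have mono: "F v < F w" if "v < w" for v w
  proof -
    have "arctan (v / c) \<le> arctan (w / c)"
      using that c by (simp add: arctan_le_iff divide_right_mono)
    then show ?thesis
      unfolding F_def using that tau by (intro add_less_le_mono mult_strict_right_mono mult_left_mono) auto
  qed
  have "F 0 = 0" by (simp add: F_def)
  moreover have "T \<le> F (T / tau)"
    unfolding F_def using tau \<open>T > 0\<close> c by simp
  moreover have "\<forall>x. 0 \<le> x \<and> x \<le> T / tau \<longrightarrow> isCont F x"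
    unfolding F_def by (intro allI impI continuous_intros isCont_o2[OF _ isCont_arctan]) (use c in auto)
  ultimately obtain w where "0 \<le> w" "F w = T"
    using IVT[of F 0 T "T / tau"] \<open>T > 0\<close> tau by auto
  with \<open>F 0 = 0\<close> \<open>T > 0\<close> have "w > 0 \<and> F w = T"
    by (metis order_less_le)
  moreover have "v = w" if "v > 0 \<and> F v = T" for v
    using that \<open>F w = T\<close> mono by (metis less_irrefl linorder_neqE)
  ultimately show ?thesis
    unfolding F_def[symmetric] T_def[symmetric] by blast
qed

lemma omega_k_equation:
  assumes "mu > 0" and "tau > 0" and "kappa > 0"
  shows "omega_k mu tau kappa n k * tau + real (n + 1) * arctan (omega_k mu tau kappa n k / (mu + kappa))
           = pi + 2 * real k * pi"
  using theI'[OF ex1_omega_equation[of tau "mu + kappa" n k]] assms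
  unfolding omega_k_def by auto

lemma char_denom_at_omega_k:
  assumes "mu > 0" and "tau > 0" and "kappa > 0"
  shows "char_denom tau (mu + kappa) n (\<i> * complex_of_real (omega_k mu tau kappa n k))
           = complex_of_real (1 - ln (alpha_k mu tau kappa n k))"
  using char_denom_at_imaginary_root[OF omega_k_equation[OF assms]]
  by (simp add: alpha_k_def)

lemma alpha_k_gt_exp_1: "alpha_k mu tau kappa n k > exp 1"
proof -
  have "1 + (omega_k mu tau kappa n k)\<^sup>2 / (mu + kappa)\<^sup>2 > 0"
    by (simp add: add_pos_nonneg)
  then show ?thesis
    unfolding alpha_k_def by simp
qed

lemma exp_less_imp_less_ln: "exp y < (x :: real) \<Longrightarrow> y < ln x"
  using ln_strict_mono[of "exp y" x] by simp

lemma deriv_char_denom_at_omega_k: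
  fixes mu tau kappa :: real and n k :: nat
  assumes "mu > 0" and "tau > 0" and "kappa > 0"
  defines "G \<equiv> char_denom tau (mu + kappa) n"
    and "\<xi> \<equiv> \<i> * complex_of_real (omega_k mu tau kappa n k)"
    and "a0 \<equiv> alpha_k mu tau kappa n k"
  shows "deriv G \<xi> \<noteq> 0" and "Re (complex_of_real (- 1 / a0) / deriv G \<xi>) > 0"
proof -
  define c where "c = mu + kappa"
  define Q where "Q = tau + of_nat (n + 1) / (complex_of_real c + \<xi>)"
  have "c > 0" using assms by (simp add: c_def)
  have "a0 > exp 1" unfolding a0_def by (rule alpha_k_gt_exp_1)
  then have "a0 > 0" and "ln a0 > 1"
    by (rule less_trans[OF exp_gt_zero], rule exp_less_imp_less_ln)
  have "Re Q > 0"
    using \<open>c > 0\<close> \<open>tau > 0\<close> by (simp add: Q_def \<xi>_def Re_complex_div_ge_0 add_pos_nonneg)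
  have "complex_of_real c + \<xi> \<noteq> 0"
    using \<open>c > 0\<close> by (simp add: \<xi>_def complex_eq_iff)
  with \<open>c > 0\<close> have "deriv G \<xi> = G \<xi> * Q"
    unfolding G_def Q_def c_def by (intro DERIV_imp_deriv char_denom_has_derivative) auto
  also have "G \<xi> = complex_of_real (1 - ln a0)"
    unfolding G_def \<xi>_def a0_def by (rule char_denom_at_omega_k[OF assms(1-3)])
  finally have dG\<xi>: "deriv G \<xi> = complex_of_real (1 - ln a0) * Q" .
  then show "deriv G \<xi> \<noteq> 0"
    using \<open>ln a0 > 1\<close> \<open>Re Q > 0\<close> by auto
  have "Q \<noteq> 0" using \<open>Re Q > 0\<close> by auto
  moreover have "complex_of_real a0 \<noteq> 0" "complex_of_real (ln a0) \<noteq> 1"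
    using \<open>ln a0 > 1\<close> by auto
  ultimately have "complex_of_real (- 1 / a0) / deriv G \<xi>
      = complex_of_real (1 / (a0 * (ln a0 - 1))) * (1 / Q)"
    unfolding dG\<xi> by (simp add: field_simps)
  then show "Re (complex_of_real (- 1 / a0) / deriv G \<xi>) > 0"
    using \<open>Re Q > 0\<close> \<open>ln a0 > 1\<close> \<open>a0 > 0\<close> by (simp add: Re_complex_div_gt_0)
qed

lemma Delta_zero_branch:
  fixes mu tau kappa a0 :: real and n :: nat
  defines "G \<equiv> char_denom tau (mu + kappa) n"
  assumes G\<xi>: "G \<xi> = complex_of_real (1 - ln a0)" and "a0 > exp 1" and "deriv G \<xi> \<noteq> 0"
  shows "\<exists>\<rho>>0. \<exists>lam lam'. lam a0 = \<xi> \<and> lam' a0 = complex_of_real (- 1 / a0) / deriv G \<xi> \<and>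
           (\<forall>a\<in>{a0 - \<rho> <..< a0 + \<rho>}.
              Delta mu tau kappa n (lam a) a = 0 \<and> (lam has_vector_derivative lam' a) (at a)) \<and>
           continuous_on {a0 - \<rho> <..< a0 + \<rho>} lam'"
proof -
  have d\<phi>: "((\<lambda>a. complex_of_real (1 - ln a)) has_vector_derivative complex_of_real (- 1 / a)) (at a)"
    if "a \<in> {exp 1<..}" for a
    using that less_trans[OF exp_gt_zero[of 1]] by (auto intro!: derivative_eq_intros)
  have "continuous_on {exp 1<..} (\<lambda>a. complex_of_real (- 1 / a))"
    using less_trans[OF exp_gt_zero[of 1]] by (intro continuous_intros) auto
  from holomorphic_inverse_along_curve[OF char_denom_holomorphic open_UNIV UNIV_I
      \<open>deriv G \<xi> \<noteq> 0\<close>[unfolded G_def] open_greaterThan _ G\<xi>[unfolded G_def, symmetric] d\<phi> this]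
    \<open>a0 > exp 1\<close>
  obtain \<rho> lam lam' where "\<rho> > 0" and ball: "ball a0 \<rho> \<subseteq> {exp 1<..}" and "lam a0 = \<xi>"
    and "lam' a0 = complex_of_real (- 1 / a0) / deriv G \<xi>"
    and lam: "\<And>a. a \<in> ball a0 \<rho> \<Longrightarrow> G (lam a) = complex_of_real (1 - ln a)"
    and "\<And>a. a \<in> ball a0 \<rho> \<Longrightarrow> (lam has_vector_derivative lam' a) (at a)"
    and "continuous_on (ball a0 \<rho>) lam'"
    unfolding G_def by auto
  moreover have "Delta mu tau kappa n (lam a) a = 0" if "a \<in> ball a0 \<rho>" for a
    using that lam[OF that] ball exp_less_imp_less_ln[of 1 a]
    by (intro Delta_eq_0_if_char_denom_eq) (auto simp: G_def)
  ultimately show ?thesis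
    unfolding ball_eq_greaterThanLessThan[symmetric]
    by (intro exI[of _ \<rho>] exI[of _ lam] exI[of _ lam'] conjI ballI) auto
qed

theorem theorem7p3:
  fixes mu tau kappa :: real and n k :: nat
  assumes "mu > 0" and "tau > 0" and "kappa > 0"
  shows "\<exists>\<rho>>0. \<exists>lam lam' :: real \<Rightarrow> complex.
     (\<forall>a\<in>{alpha_k mu tau kappa n k - \<rho> <..< alpha_k mu tau kappa n k + \<rho>}.
        (lam has_vector_derivative lam' a) (at a)) \<and>
     continuous_on {alpha_k mu tau kappa n k - \<rho> <..< alpha_k mu tau kappa n k + \<rho>} lam' \<and>
     lam (alpha_k mu tau kappa n k) = \<i> * complex_of_real (omega_k mu tau kappa n k) \<and>
     (\<forall>a\<in>{alpha_k mu tau kappa n k - \<rho> <..< alpha_k mu tau kappa n k + \<rho>}.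
        Delta mu tau kappa n (lam a) a = 0) \<and>
     Re (lam' (alpha_k mu tau kappa n k)) > 0"
proof -
  let ?\<alpha> = "alpha_k mu tau kappa n k" and ?\<xi> = "\<i> * complex_of_real (omega_k mu tau kappa n k)"
  obtain \<rho> lam lam' where "\<rho> > 0" and "lam ?\<alpha> = ?\<xi>"
    and lam': "lam' ?\<alpha> = complex_of_real (- 1 / ?\<alpha>) / deriv (char_denom tau (mu + kappa) n) ?\<xi>"
    and "\<forall>a\<in>{?\<alpha> - \<rho> <..< ?\<alpha> + \<rho>}.
           Delta mu tau kappa n (lam a) a = 0 \<and> (lam has_vector_derivative lam' a) (at a)"
    and "continuous_on {?\<alpha> - \<rho> <..< ?\<alpha> + \<rho>} lam'"
    using Delta_zero_branch[OF char_denom_at_omega_k[OF assms] alpha_k_gt_exp_1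
        deriv_char_denom_at_omega_k(1)[OF assms]]
    by blast
  moreover have "Re (lam' ?\<alpha>) > 0"
    unfolding lam' by (rule deriv_char_denom_at_omega_k(2)[OF assms])
  ultimately show ?thesis
    by blast
qed

end
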